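(* Let $\psi \subseteq \mathbb{N}$ be an undecidable property of generators, and let $L_0 \subseteq L_1 \subseteq L_2 \subseteq \cdots$ be a countable (but not computably enumerable) sequence of languages, each $L_i \subseteq \mathbb{N}$ decidable, such that (1) every $p \in L_i$ satisfies $\psi(p)$, for each $i$; and (2) $\bigcup_{i \in \mathbb{N}} L_i = \psi$. Then $\lim_{i \to \infty} C(L_i) = \infty$.
   Context: Programs (generators) are identified with natural numbers in a fixed universal programming language. For a decidable set $L_i$, $C(L_i)$ denotes the length of the shortest program deciding $L_i$. *)

theory Defs
  imports Main "HOL-Library.Countable"
begin

text \<open>A fixed universal programming language: Kleene's general recursive function terms.\<close>

datatype recf = Z | S | Proj nat | Comp recf "recf list" | Prec recf recf | Mn recf

instance recf :: countable
  by countable_datatype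

inductive eval :: "recf \<Rightarrow> nat list \<Rightarrow> nat \<Rightarrow> bool" where
  eval_Z: "eval Z xs 0"
| eval_S: "eval S (x # xs) (Suc x)"
| eval_Proj: "i < length xs \<Longrightarrow> eval (Proj i) xs (xs ! i)"
| eval_Comp: "list_all2 (\<lambda>g y. eval g xs y) gs ys \<Longrightarrow> eval f ys v \<Longrightarrow> eval (Comp f gs) xs v"
| eval_Prec0: "eval f xs v \<Longrightarrow> eval (Prec f g) (0 # xs) v"
| eval_PrecS: "eval (Prec f g) (n # xs) w \<Longrightarrow> eval g (n # w # xs) v
      \<Longrightarrow> eval (Prec f g) (Suc n # xs) v"
| eval_Mn: "eval f (y # xs) 0 \<Longrightarrow> (\<And>z. z < y \<Longrightarrow> \<exists>w. w > 0 \<and> eval f (z # xs) w)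
      \<Longrightarrow> eval (Mn f) xs y"

text \<open>Programs are natural numbers: program p is the term decoded from p.\<close>

definition prog :: "nat \<Rightarrow> recf" where
  "prog p = from_nat p"

fun bitlen :: "nat \<Rightarrow> nat" where
  "bitlen n = (if n = 0 then 0 else Suc (bitlen (n div 2)))"

definition decides :: "nat \<Rightarrow> nat set \<Rightarrow> bool" where
  "decides p L \<longleftrightarrow> (\<forall>n. eval (prog p) [n] (if n \<in> L then 1 else 0))"

definition decidable_set :: "nat set \<Rightarrow> bool" where
  "decidable_set L \<longleftrightarrow> (\<exists>p. decides p L)"

definition C :: "nat set \<Rightarrow> nat" where
  "C L = (LEAST k. \<exists>p. decides p L \<and> bitlen p = k)"

definition ce_sequence :: "(nat \<Rightarrow> nat set) \<Rightarrow> bool" where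
  "ce_sequence L \<longleftrightarrow> (\<exists>e. \<forall>i. \<exists>c. eval (prog e) [i] c \<and> decides c (L i))"

end

theory Submission
  imports Defs
begin

text \<open>If \<open>C (L i)\<close> stayed below some bound \<open>k\<close> infinitely often, then, as there are fewer than
  \<open>2 ^ k\<close> programs of length below \<open>k\<close>, a single program would decide infinitely many of the
  \<open>L i\<close>. Since the languages increase towards \<open>psi\<close>, that program decides \<open>psi\<close> itself.\<close>

declare bitlen.simps [simp del]

lemma bitlen_0 [simp]: "bitlen 0 = 0"
  by (simp add: bitlen.simps)

lemma bitlen_pos: "0 < p \<Longrightarrow> bitlen p = Suc (bitlen (p div 2))"
  by (subst bitlen.simps) simp

lemma less_two_power_bitlen: "p < 2 ^ bitlen p"
proof (induction p rule: less_induct)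
  case (less p)
  show ?case
  proof (cases "p = 0")
    case False
    then have "p div 2 < 2 ^ bitlen (p div 2)"
      using less by simp
    with False show ?thesis
      by (simp add: bitlen_pos)
  qed simp
qed

lemma obtain_shortest_decider:
  assumes "decidable_set L"
  obtains p where "decides p L" "bitlen p = C L"
proof -
  from assms have "\<exists>k p. decides p L \<and> bitlen p = k"
    unfolding decidable_set_def by blast
  then have "\<exists>p. decides p L \<and> bitlen p = C L"
    unfolding C_def by (rule LeastI_ex)
  with that show thesis by blast
qed

lemma infinitely_often_same_decider:
  assumes dec: "\<And>i. decidable_set (L i)"
    and bounded: "infinite {i. C (L i) < k}"
  obtains p where "infinite {i. decides p (L i)}"
proof -
  have "\<forall>i \<in> {i. C (L i) < k}. \<exists>p \<in> {..<2 ^ k}. decides p (L i)"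
  proof
    fix i assume "i \<in> {i. C (L i) < k}"
    then have short: "C (L i) < k" by simp
    obtain p where p: "decides p (L i)" "bitlen p = C (L i)"
      using dec by (rule obtain_shortest_decider)
    have "p < 2 ^ bitlen p"
      by (rule less_two_power_bitlen)
    also have "\<dots> \<le> 2 ^ k"
      using p(2) short by (intro power_increasing) auto
    finally show "\<exists>p \<in> {..<2 ^ k}. decides p (L i)"
      using p(1) by blast
  qed
  from pigeonhole_infinite_rel[OF bounded finite_lessThan this]
  obtain p where "infinite {i \<in> {i. C (L i) < k}. decides p (L i)}" ..
  then have "infinite {i. decides p (L i)}"
    by (rule infinite_super[rotated]) blast
  with that show thesis .
qed

lemma decides_Union_if_infinitely_often:
  fixes L :: "nat \<Rightarrow> nat set"
  assumes "infinite {i. decides p (L i)}"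
    and "mono L"
  shows "decides p (\<Union>i. L i)"
  unfolding decides_def
proof
  fix n
  have "\<exists>j. n \<in> (\<Union>i. L i) \<longrightarrow> n \<in> L j"
    by blast
  then obtain j where j: "n \<in> (\<Union>i. L i) \<longrightarrow> n \<in> L j" ..
  obtain i where "decides p (L i)" "j \<le> i"
    using assms(1) finite_nat_set_iff_bounded not_le by blast
  then have "eval (prog p) [n] (if n \<in> L i then 1 else 0)"
    unfolding decides_def by blast
  moreover have "n \<in> L i \<longleftrightarrow> n \<in> (\<Union>i. L i)"
    using j \<open>j \<le> i\<close> assms(2) by (auto dest: monoD)
  ultimately show "eval (prog p) [n] (if n \<in> (\<Union>i. L i) then 1 else 0)"
    by (simp only:)
qed

theorem mainTheorem11:
  fixes psi :: "nat set" and L :: "nat \<Rightarrow> nat set"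
  assumes undec: "\<not> decidable_set psi"
    and chain: "\<And>i. L i \<subseteq> L (Suc i)"
    and not_ce: "\<not> ce_sequence L"
    and dec: "\<And>i. decidable_set (L i)"
    and sound: "\<And>i. \<forall>p \<in> L i. p \<in> psi"
    and union: "(\<Union>i. L i) = psi"
  shows "filterlim (\<lambda>i. C (L i)) at_top sequentially"
proof (rule ccontr)
  assume "\<not> ?thesis"
  then obtain k where "\<not> eventually (\<lambda>i. k \<le> C (L i)) sequentially"
    unfolding filterlim_at_top by blast
  then have "infinite {i. C (L i) < k}"
    by (simp add: not_eventually frequently_cofinite not_le flip: cofinite_eq_sequentially)
  with dec obtain p where "infinite {i. decides p (L i)}"
    by (rule infinitely_often_same_decider)
  moreover have "mono L"
    using chain by (simp add: mono_iff_le_Suc)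
  ultimately have "decides p psi"
    unfolding union[symmetric] by (rule decides_Union_if_infinitely_often)
  with undec show False
    unfolding decidable_set_def by blast
qed

end
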